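(* Let $N\ge3$, $\mu\ge0$, assume (K0) and (F0), and let $p>p_S(\alpha)$. There exist $\varepsilon_0>0$ and $C_0>0$ such that for every $\varepsilon\in(0,\varepsilon_0]$ there is $\rho>0$ with the following property: if $\zeta>0$ and $r_1\in(0,\rho)$ satisfy $$|u(r_1,\zeta)-\gamma r_1^{-\theta}|\le\varepsilon r_1^{-\theta}\quad\text{and}\quad |u_r(r_1,\zeta)+\theta\gamma r_1^{-1-\theta}|\le\varepsilon r_1^{-1-\theta},$$ then $r_0(\zeta)>\rho$ and for all $r\in(r_1,\rho]$, $$|u(r,\zeta)-\gamma r^{-\theta}|\le C_0\varepsilon r^{-\theta},\qquad |u_r(r,\zeta)+\theta\gamma r^{-1-\theta}|\le C_0\varepsilon r^{-1-\theta}.$$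
   Context: (K0): $K:(0,\infty)\to(0,\infty)$ is continuous and $K(r)=(k_0+o(1))r^{\alpha}$ as $r\to0$ for some $\alpha>-2$, $k_0>0$. (F0): $f:(0,\infty)\to[0,\infty)$ is continuous, not identically zero, and $f(r)=O(r^{\nu})$ as $r\to0$ for some $\nu>-2$. $p_S(\alpha)=\frac{N+2+2\alpha}{N-2}$, $\theta:=\frac{2+\alpha}{p-1}$, $\gamma:=k_0^{-1/(p-1)}\big(\theta(N-2-\theta)\big)^{1/(p-1)}$. For $\zeta>0$, $u(\cdot,\zeta)$ denotes the regular solution of $u''+\frac{N-1}{r}u'+K(r)\max\{u,0\}^p+\mu f(r)=0$ with $u(0)=\zeta$, i.e. the continuous solution on $[0,\infty)$ of $u(r)=\zeta-\int_0^r\frac{s^{2-N}-r^{2-N}}{N-2}s^{N-1}\big(K(s)\max\{u(s),0\}^p+\mu f(s)\big)ds$; $r_0(\zeta)\in(0,\infty]$ is its first zero ($r_0(\zeta)=\infty$ if $u(\cdot,\zeta)>0$ on $(0,\infty)$). *)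

theory Defs
  imports "HOL-Analysis.Analysis" "HOL-Library.Landau_Symbols"
begin

definition pS :: "nat \<Rightarrow> real \<Rightarrow> real" where
  "pS N \<alpha> = (real N + 2 + 2 * \<alpha>) / (real N - 2)"

definition theta :: "real \<Rightarrow> real \<Rightarrow> real" where
  "theta \<alpha> p = (2 + \<alpha>) / (p - 1)"

definition gam :: "nat \<Rightarrow> real \<Rightarrow> real \<Rightarrow> real \<Rightarrow> real" where
  "gam N k0 \<alpha> p =
     k0 powr (- 1 / (p - 1)) *
     (theta \<alpha> p * (real N - 2 - theta \<alpha> p)) powr (1 / (p - 1))"

definition regular_solution ::
  "nat \<Rightarrow> (real \<Rightarrow> real) \<Rightarrow> real \<Rightarrow> real \<Rightarrow> (real \<Rightarrow> real) \<Rightarrow> real \<Rightarrow> (real \<Rightarrow> real) \<Rightarrow> bool"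
  where
  "regular_solution N K p \<mu> f \<zeta> u \<longleftrightarrow>
     continuous_on {0..} u \<and>
     (\<forall>r\<ge>0. ((\<lambda>s. (s powr (2 - real N) - r powr (2 - real N)) / (real N - 2)
                     * s powr (real N - 1)
                     * (K s * (max (u s) 0) powr p + \<mu> * f s))
               has_integral (\<zeta> - u r)) {0..r})"

end

theory Submission
  imports Defs
begin

text \<open>In the Emden-Fowler variables \<open>t = log r\<close>, \<open>x = r\<^sup>\<theta> u - \<gamma>\<close> and \<open>y = dx/dt\<close> the
  equation becomes a damped oscillator \<open>x'' + \<delta> x' + \<kappa> x = - R\<close> with damping
  \<open>\<delta> = N - 2 - 2 \<theta>\<close>, positive exactly because \<open>p > p\<^sub>S(\<alpha>)\<close>, stiffness
  \<open>\<kappa> = (p - 1) \<theta> (N - 2 - \<theta>) > 0\<close>, and a remainder \<open>R\<close> that is \<open>o(\<bar>x\<bar>)\<close> plus a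
  term tending to \<open>0\<close> as \<open>r \<rightarrow> 0\<close> by (K0) and (F0). The energy
  \<open>E = (\<kappa> + \<delta>\<^sup>2/2) x\<^sup>2 + \<delta> x y + y\<^sup>2\<close> of the linear part decreases on the level
  \<open>E = \<Lambda> \<epsilon>\<^sup>2\<close> as long as \<open>r\<close> is small and \<open>\<bar>x\<bar>\<close> stays in the range of the linearisation,
  so the initial bound \<open>E(r\<^sub>1) < \<Lambda> \<epsilon>\<^sup>2\<close> persists up to \<open>\<rho>\<close>. A bound on \<open>E\<close> gives
  \<open>\<bar>x\<bar>, \<bar>y\<bar> = O(\<epsilon>)\<close>, which are the claimed estimates and keep \<open>u\<close> positive.\<close>

lemma powr_diff_one: "(r::real) > 0 \<Longrightarrow> r powr (a - 1) = r powr a / r"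
  by (simp add: powr_diff)

lemma powr_mult_powr_eq_powr_div:
  fixes r :: real
  assumes "r > 0" and "a + b = c - 1"
  shows "r powr a * r powr b = r powr c / r"
  using assms by (simp add: powr_add[symmetric] powr_diff_one)

lemma has_real_derivative_integral_from:
  fixes h :: "real \<Rightarrow> real"
  assumes cont: "continuous_on {a<..} h" and int: "\<And>c. c > a \<Longrightarrow> h integrable_on {a..c}"
    and r: "r > a"
  shows "((\<lambda>r. integral {a..r} h) has_real_derivative h r) (at r)"
proof -
  define c where "c = (a + r) / 2"
  have c: "a < c" "c < r" using r by (auto simp: c_def)
  have "((\<lambda>x. integral {c..x} h) has_real_derivative h r) (at r within {c..r+1})"
    using c by (intro integral_has_real_derivative continuous_on_subset[OF cont]) auto
  moreover have "at r within {c..r+1} = at r"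
    using c by (intro at_within_interior) auto
  ultimately have "((\<lambda>x. integral {a..c} h + integral {c..x} h) has_real_derivative h r) (at r)"
    by (auto intro!: derivative_eq_intros)
  then show ?thesis
  proof (rule has_field_derivative_transform_within_open[where S = "{c<..}"])
    fix x assume "x \<in> {c<..}"
    then show "integral {a..c} h + integral {c..x} h = integral {a..x} h"
      using c int[of x] Henstock_Kurzweil_Integration.integral_combine[of a c x h] by auto
  qed (use c in auto)
qed

lemma powr_linear_approx:
  fixes c p \<gamma> \<eta> :: real
  assumes "\<gamma> > 0" and "\<eta> > 0"
  shows "\<exists>d>0. \<forall>w. \<bar>w - \<gamma>\<bar> < d \<longrightarrow>
     \<bar>c * w powr p - c * \<gamma> powr p - c * p * \<gamma> powr (p - 1) * (w - \<gamma>)\<bar> \<le> \<eta> * \<bar>w - \<gamma>\<bar>"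
proof -
  have "((\<lambda>w. c * w powr p) has_derivative (\<lambda>h. c * (p * \<gamma> powr (p - 1)) * h)) (at \<gamma>)"
    using assms(1) by (auto intro!: derivative_eq_intros simp: has_field_derivative_def[symmetric])
  then obtain d where "d > 0" and "\<forall>w. norm (w - \<gamma>) < d \<longrightarrow>
     norm (c * w powr p - c * \<gamma> powr p - c * (p * \<gamma> powr (p - 1)) * (w - \<gamma>)) \<le> \<eta> * norm (w - \<gamma>)"
    using assms(2) unfolding has_derivative_at_alt by blast
  then show ?thesis
    by (intro exI[of _ d]) (auto simp: algebra_simps)
qed

lemma tendsto_powr_mult_bigo_zero:
  fixes f :: "real \<Rightarrow> real"
  assumes f: "f \<in> O[at_right 0](\<lambda>r. r powr \<nu>)" and a: "a + \<nu> > 0"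
  shows "((\<lambda>r. r powr a * \<bar>f r\<bar>) \<longlongrightarrow> 0) (at_right 0)"
proof -
  obtain c where "eventually (\<lambda>r. norm (f r) \<le> c * norm (r powr \<nu>)) (at_right 0)"
    using f by (elim landau_o.bigE)
  moreover have "eventually (\<lambda>r::real. r > 0) (at_right 0)"
    by (simp add: eventually_at_right_less)
  ultimately have "eventually (\<lambda>r. norm (r powr a * \<bar>f r\<bar>) \<le> c * r powr (a + \<nu>)) (at_right 0)"
  proof eventually_elim
    case (elim r)
    then have "norm (r powr a * \<bar>f r\<bar>) \<le> r powr a * (c * r powr \<nu>)"
      by (simp add: mult_left_mono)
    also have "\<dots> = c * r powr (a + \<nu>)"
      by (simp add: powr_add)
    finally show ?case .
  qed
  moreover have "((\<lambda>r::real. r powr (a + \<nu>)) \<longlongrightarrow> 0) (at_right 0)"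
  proof (rule tendsto_zero_powrI[OF tendsto_ident_at tendsto_const])
    show "\<forall>\<^sub>F r in at_right 0. 0 \<le> (r::real)"
      using eventually_at_right_less[of "0::real"] by (rule eventually_mono) simp
  qed (use a in simp)
  then have "((\<lambda>r. c * r powr (a + \<nu>)) \<longlongrightarrow> 0) (at_right 0)"
    by (rule tendsto_mult_right_zero)
  ultimately show ?thesis
    by (rule Lim_null_comparison)
qed

lemma le_level_if_deriv_neg_at_level:
  fixes V V' :: "real \<Rightarrow> real"
  assumes ab: "a \<le> b" and cont: "continuous_on {a..b} V" and start: "V a < L"
    and at_level: "\<And>r. a < r \<Longrightarrow> r \<le> b \<Longrightarrow> V r = L \<Longrightarrow> (V has_real_derivative V' r) (at r) \<and> V' r < 0"
  shows "\<forall>r\<in>{a..b}. V r \<le> L"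
proof (rule ccontr)
  assume "\<not> ?thesis"
  then obtain t where t: "t \<in> {a..b}" "V t > L" by force
  define S where "S = {a..b} \<inter> V -` {L..}"
  have "closed S"
    unfolding S_def by (rule continuous_closed_preimage[OF cont]) auto
  moreover have "t \<in> S" using t unfolding S_def by auto
  moreover have bdd: "bdd_below S" unfolding S_def by (rule bdd_belowI[of _ a]) auto
  ultimately have "Inf S \<in> S"
    using closed_contains_Inf by blast
  define s where "s = Inf S"
  have least: "\<And>z. z \<in> S \<Longrightarrow> s \<le> z"
    unfolding s_def using bdd by (simp add: cInf_lower)
  have s: "a \<le> s" "s \<le> b" "V s \<ge> L"
    using \<open>Inf S \<in> S\<close> unfolding s_def S_def by auto
  with start have "a < s"
    by (metis antisym_conv1 not_le)
  obtain c where c: "a \<le> c" "c \<le> s" "V c = L"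
    using IVT'[of V a L s] start s continuous_on_subset[OF cont, of "{a..s}"] by auto
  then have "s \<le> c"
    using s by (intro least) (auto simp: S_def)
  with c have "V s = L" by simp
  from at_level[OF \<open>a < s\<close> s(2) this]
  obtain d where d: "d > 0" "\<And>h. h > 0 \<Longrightarrow> h < d \<Longrightarrow> V s < V (s - h)"
    using DERIV_neg_dec_left by blast
  define h where "h = min d (s - a) / 2"
  have h: "h > 0" "h < d" "h < s - a"
    using d \<open>a < s\<close> unfolding h_def by auto
  then have "s - h \<in> S"
    using d(2)[of h] \<open>V s = L\<close> s unfolding S_def by auto
  with least h show False by fastforce
qed

section \<open>Energy of a perturbed damped oscillator\<close>

definition oscillator_energy :: "real \<Rightarrow> real \<Rightarrow> real \<Rightarrow> real \<Rightarrow> real"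
  where "oscillator_energy \<delta> \<kappa> x y = (\<kappa> + \<delta>\<^sup>2 / 2) * x\<^sup>2 + \<delta> * x * y + y\<^sup>2"

definition perturbation_tolerance :: "real \<Rightarrow> real \<Rightarrow> real"
  where "perturbation_tolerance \<delta> \<kappa> = \<delta> * min \<kappa> 1 / (8 * (\<delta> + 2))"

lemma oscillator_energy_ge:
  assumes "\<kappa> > 0"
  shows "min \<kappa> (1/2) * (x\<^sup>2 + y\<^sup>2) \<le> oscillator_energy \<delta> \<kappa> x y"
proof -
  have "oscillator_energy \<delta> \<kappa> x y = \<kappa> * x\<^sup>2 + y\<^sup>2 / 2 + (\<delta> * x + y)\<^sup>2 / 2"
    unfolding oscillator_energy_def by (simp add: power2_eq_square field_simps)
  moreover have "min \<kappa> (1/2) * x\<^sup>2 \<le> \<kappa> * x\<^sup>2" "min \<kappa> (1/2) * y\<^sup>2 \<le> 1/2 * y\<^sup>2"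
    by (rule mult_right_mono; simp)+
  moreover have "(\<delta> * x + y)\<^sup>2 / 2 \<ge> 0"
    by simp
  ultimately show ?thesis
    unfolding distrib_left by linarith
qed

lemma oscillator_energy_le:
  assumes "\<delta> \<ge> 0" "\<kappa> \<ge> 0"
  shows "oscillator_energy \<delta> \<kappa> x y \<le> (\<kappa> + \<delta>\<^sup>2 / 2 + \<delta> + 1) * (x\<^sup>2 + y\<^sup>2)"
proof -
  have "x * y \<le> x\<^sup>2 + y\<^sup>2"
    using sum_squares_bound[of x y] zero_le_power2[of x] zero_le_power2[of y] by linarith
  then have "\<delta> * (x * y) \<le> \<delta> * (x\<^sup>2 + y\<^sup>2)"
    using assms(1) by (rule mult_left_mono)
  moreover have "(\<kappa> + \<delta>\<^sup>2 / 2) * y\<^sup>2 \<ge> 0" "x\<^sup>2 \<ge> 0"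
    using assms by simp_all
  moreover have "(\<kappa> + \<delta>\<^sup>2 / 2 + \<delta> + 1) * (x\<^sup>2 + y\<^sup>2) = oscillator_energy \<delta> \<kappa> x y
      + (\<delta> * (x\<^sup>2 + y\<^sup>2) - \<delta> * (x * y)) + x\<^sup>2 + (\<kappa> + \<delta>\<^sup>2 / 2) * y\<^sup>2"
    unfolding oscillator_energy_def by (simp add: algebra_simps)
  ultimately show ?thesis
    by linarith
qed

lemma abs_le_of_oscillator_energy_le:
  assumes "\<kappa> > 0" "L \<ge> 0" "\<epsilon> \<ge> 0" and E: "oscillator_energy \<delta> \<kappa> x y \<le> L * \<epsilon>\<^sup>2"
  shows "\<bar>x\<bar> \<le> (1 + L / min \<kappa> (1/2)) * \<epsilon>" "\<bar>y\<bar> \<le> (1 + L / min \<kappa> (1/2)) * \<epsilon>"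
proof -
  define t where "t = L / min \<kappa> (1/2)"
  have t: "t \<ge> 0" using assms by (simp add: t_def)
  have "min \<kappa> (1/2) * (x\<^sup>2 + y\<^sup>2) \<le> min \<kappa> (1/2) * (t * \<epsilon>\<^sup>2)"
    using oscillator_energy_ge[OF assms(1), of x y \<delta>] E assms(1) by (simp add: t_def)
  then have "x\<^sup>2 + y\<^sup>2 \<le> t * \<epsilon>\<^sup>2"
    using assms(1) by (simp add: mult_le_cancel_left_pos)
  moreover have "t * \<epsilon>\<^sup>2 \<le> ((1 + t) * \<epsilon>)\<^sup>2"
  proof -
    have "t \<le> (1 + t)\<^sup>2"
      using t by (simp add: power2_eq_square algebra_simps)
    then show ?thesis
      by (simp add: power_mult_distrib mult_right_mono)
  qed
  ultimately have "x\<^sup>2 \<le> ((1 + t) * \<epsilon>)\<^sup>2" "y\<^sup>2 \<le> ((1 + t) * \<epsilon>)\<^sup>2"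
    using zero_le_power2[of x] zero_le_power2[of y] by linarith+
  then show "\<bar>x\<bar> \<le> (1 + t) * \<epsilon>" "\<bar>y\<bar> \<le> (1 + t) * \<epsilon>"
    using t assms(3) by (simp_all add: abs_le_square_iff[symmetric])
qed

text \<open>The hypotheses are the damped oscillator \<open>x'' + \<delta> x' + \<kappa> x = - R\<close> in the variable
  \<open>log r\<close>.\<close>
lemma oscillator_energy_has_derivative:
  assumes "(x has_real_derivative y r / r) (at r)"
    and "(y has_real_derivative (- \<kappa> * x r - \<delta> * y r - R) / r) (at r)"
  shows "((\<lambda>r. oscillator_energy \<delta> \<kappa> (x r) (y r)) has_real_derivative
      (- \<delta> * \<kappa> * (x r)\<^sup>2 - \<delta> * (y r)\<^sup>2 - (\<delta> * x r + 2 * y r) * R) / r) (at r)"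
proof -
  define y' where "y' = (- \<kappa> * x r - \<delta> * y r - R) / r"
  have "((\<lambda>r. oscillator_energy \<delta> \<kappa> (x r) (y r)) has_real_derivative
      (\<kappa> + \<delta>\<^sup>2 / 2) * (y r / r * x r + x r * (y r / r)) + \<delta> * (y r / r * y r + x r * y')
      + (y' * y r + y r * y')) (at r)"
    unfolding oscillator_energy_def power2_eq_square[of "x _"] power2_eq_square[of "y _"]
    using assms unfolding y'_def[symmetric]
    by (auto intro!: derivative_eq_intros simp: algebra_simps add_divide_distrib)
  moreover have "(\<kappa> + \<delta>\<^sup>2 / 2) * (y r / r * x r + x r * (y r / r)) + \<delta> * (y r / r * y r + x r * y')
      + (y' * y r + y r * y')
    = (- \<delta> * \<kappa> * (x r)\<^sup>2 - \<delta> * (y r)\<^sup>2 - (\<delta> * x r + 2 * y r) * R) / r"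
    unfolding y'_def by (simp add: power2_eq_square diff_divide_distrib add_divide_distrib algebra_simps)
  ultimately show ?thesis by simp
qed

lemma oscillator_energy_level_ge:
  assumes "\<delta> \<ge> 0" "\<kappa> \<ge> 0" and L: "L \<ge> 2 * (\<kappa> + \<delta>\<^sup>2 / 2 + \<delta> + 1)"
    and E: "oscillator_energy \<delta> \<kappa> x y = L * \<epsilon>\<^sup>2"
  shows "2 * \<epsilon>\<^sup>2 \<le> x\<^sup>2 + y\<^sup>2"
proof -
  have "L > 0"
    using L assms(1,2) zero_le_power2[of \<delta>] by argo
  have "L * \<epsilon>\<^sup>2 \<le> (\<kappa> + \<delta>\<^sup>2 / 2 + \<delta> + 1) * (x\<^sup>2 + y\<^sup>2)"
    using E oscillator_energy_le[OF assms(1,2), of x y] by simp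
  also have "\<dots> \<le> (L / 2) * (x\<^sup>2 + y\<^sup>2)"
    using L by (intro mult_right_mono) auto
  finally have "L * (2 * \<epsilon>\<^sup>2) \<le> L * (x\<^sup>2 + y\<^sup>2)"
    by simp
  then show ?thesis
    using \<open>L > 0\<close> by (simp add: mult_le_cancel_left_pos)
qed

lemma perturbation_term_le:
  fixes \<delta> \<kappa> \<epsilon> x y R :: real
  defines "\<eta> \<equiv> perturbation_tolerance \<delta> \<kappa>"
  assumes \<delta>: "\<delta> > 0" and \<kappa>: "\<kappa> > 0" and R: "\<bar>R\<bar> \<le> \<eta> * \<bar>x\<bar> + 2 * \<eta> * \<epsilon>"
  shows "\<bar>(\<delta> * x + 2 * y) * R\<bar> \<le> \<delta> * min \<kappa> 1 / 2 * (x\<^sup>2 + y\<^sup>2) + \<delta> * min \<kappa> 1 / 8 * \<epsilon>\<^sup>2"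
proof -
  define c where "c = \<delta> * min \<kappa> 1"
  define s where "s = \<bar>x\<bar> + \<bar>y\<bar>"
  have c: "c > 0" using \<delta> \<kappa> by (simp add: c_def)
  have "\<eta> = c / (8 * (\<delta> + 2))"
    unfolding \<eta>_def perturbation_tolerance_def c_def ..
  then have \<eta>_eq: "(\<delta> + 2) * \<eta> = c / 8" and \<eta>_nonneg: "\<eta> \<ge> 0"
    using \<delta> c by (simp add: field_simps, simp)
  have "\<bar>\<delta> * x + 2 * y\<bar> \<le> (\<delta> + 2) * s"
    using \<delta> unfolding s_def by (simp add: abs_mult algebra_simps abs_triangle_ineq[THEN order_trans])
  moreover have "\<bar>R\<bar> \<le> \<eta> * (s + 2 * \<epsilon>)"
  proof -
    have "\<eta> * \<bar>x\<bar> \<le> \<eta> * s"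
      using \<eta>_nonneg unfolding s_def by (intro mult_left_mono) auto
    then show ?thesis
      using R by (simp add: algebra_simps)
  qed
  ultimately have "\<bar>(\<delta> * x + 2 * y) * R\<bar> \<le> (\<delta> + 2) * s * (\<eta> * (s + 2 * \<epsilon>))"
    unfolding abs_mult by (rule mult_mono) (use \<delta> s_def in auto)
  also have "\<dots> = ((\<delta> + 2) * \<eta>) * (s\<^sup>2 + 2 * (s * \<epsilon>))"
    by (simp add: power2_eq_square algebra_simps)
  also have "\<dots> = c / 8 * (s\<^sup>2 + 2 * (s * \<epsilon>))"
    unfolding \<eta>_eq ..
  also have "\<dots> \<le> c / 8 * (2 * s\<^sup>2 + \<epsilon>\<^sup>2)"
    using c sum_squares_bound[of s \<epsilon>] by (intro mult_left_mono) auto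
  also have "\<dots> \<le> c / 8 * (4 * (x\<^sup>2 + y\<^sup>2) + \<epsilon>\<^sup>2)"
  proof -
    have "s\<^sup>2 \<le> 2 * (x\<^sup>2 + y\<^sup>2)"
      using sum_squares_bound[of "\<bar>x\<bar>" "\<bar>y\<bar>"] unfolding s_def by (simp add: power2_sum)
    then show ?thesis using c by (intro mult_left_mono) auto
  qed
  finally show ?thesis
    unfolding c_def by (simp add: algebra_simps)
qed

lemma oscillator_dissipation_neg:
  fixes \<delta> \<kappa> L \<epsilon> x y R :: real
  defines "\<eta> \<equiv> perturbation_tolerance \<delta> \<kappa>"
  assumes \<delta>: "\<delta> > 0" and \<kappa>: "\<kappa> > 0" and \<epsilon>: "\<epsilon> > 0"
    and L: "L \<ge> 2 * (\<kappa> + \<delta>\<^sup>2 / 2 + \<delta> + 1)"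
    and E: "oscillator_energy \<delta> \<kappa> x y = L * \<epsilon>\<^sup>2"
    and R: "\<bar>R\<bar> \<le> \<eta> * \<bar>x\<bar> + 2 * \<eta> * \<epsilon>"
  shows "- \<delta> * \<kappa> * x\<^sup>2 - \<delta> * y\<^sup>2 - (\<delta> * x + 2 * y) * R < 0"
proof -
  define c where "c = \<delta> * min \<kappa> 1"
  have c: "c > 0" using \<delta> \<kappa> by (simp add: c_def)
  have dissipation: "c * (x\<^sup>2 + y\<^sup>2) \<le> \<delta> * \<kappa> * x\<^sup>2 + \<delta> * y\<^sup>2"
  proof -
    have "min \<kappa> 1 * x\<^sup>2 \<le> \<kappa> * x\<^sup>2" "min \<kappa> 1 * y\<^sup>2 \<le> 1 * y\<^sup>2"
      by (rule mult_right_mono; simp)+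
    then have "\<delta> * (min \<kappa> 1 * x\<^sup>2) \<le> \<delta> * (\<kappa> * x\<^sup>2)" "\<delta> * (min \<kappa> 1 * y\<^sup>2) \<le> \<delta> * (1 * y\<^sup>2)"
      using \<delta> by (simp_all add: mult_left_mono)
    then show ?thesis
      unfolding c_def by (simp add: algebra_simps)
  qed
  have "c * (2 * \<epsilon>\<^sup>2) \<le> c * (x\<^sup>2 + y\<^sup>2)"
    using oscillator_energy_level_ge[OF _ _ L E] \<delta> \<kappa> c by (intro mult_left_mono) auto
  moreover have "\<bar>(\<delta> * x + 2 * y) * R\<bar> \<le> c / 2 * (x\<^sup>2 + y\<^sup>2) + c / 8 * \<epsilon>\<^sup>2"
    using perturbation_term_le[OF \<delta> \<kappa> R[unfolded \<eta>_def]] unfolding c_def .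
  moreover have "- ((\<delta> * x + 2 * y) * R) \<le> \<bar>(\<delta> * x + 2 * y) * R\<bar>"
    by (rule abs_ge_minus_self)
  moreover have "c * \<epsilon>\<^sup>2 > 0"
    using c \<epsilon> by simp
  ultimately show ?thesis
    using dissipation by (simp add: algebra_simps)
qed

lemma oscillator_energy_trapped:
  fixes x y R :: "real \<Rightarrow> real" and \<delta> \<kappa> L \<epsilon> a b :: real
  defines "\<eta> \<equiv> perturbation_tolerance \<delta> \<kappa>"
  assumes \<delta>: "\<delta> > 0" and \<kappa>: "\<kappa> > 0" and \<epsilon>: "\<epsilon> > 0"
    and L: "L \<ge> 2 * (\<kappa> + \<delta>\<^sup>2 / 2 + \<delta> + 1)" and ab: "0 < a" "a \<le> b"
    and dx: "\<And>r. r \<in> {a..b} \<Longrightarrow> (x has_real_derivative y r / r) (at r)"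
    and dy: "\<And>r. r \<in> {a..b} \<Longrightarrow>
      (y has_real_derivative (- \<kappa> * x r - \<delta> * y r - R r) / r) (at r)"
    and R: "\<And>r. r \<in> {a<..b} \<Longrightarrow> oscillator_energy \<delta> \<kappa> (x r) (y r) = L * \<epsilon>\<^sup>2 \<Longrightarrow>
      \<bar>R r\<bar> \<le> \<eta> * \<bar>x r\<bar> + 2 * \<eta> * \<epsilon>"
    and start: "oscillator_energy \<delta> \<kappa> (x a) (y a) < L * \<epsilon>\<^sup>2"
  shows "\<forall>r\<in>{a..b}. oscillator_energy \<delta> \<kappa> (x r) (y r) \<le> L * \<epsilon>\<^sup>2"
proof (rule le_level_if_deriv_neg_at_level[where V = "\<lambda>r. oscillator_energy \<delta> \<kappa> (x r) (y r)",
      OF ab(2) _ start])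
  define E' where "E' r = (- \<delta> * \<kappa> * (x r)\<^sup>2 - \<delta> * (y r)\<^sup>2 - (\<delta> * x r + 2 * y r) * R r) / r"
    for r
  have dE: "((\<lambda>r. oscillator_energy \<delta> \<kappa> (x r) (y r)) has_real_derivative E' r) (at r)"
    if "r \<in> {a..b}" for r
    unfolding E'_def by (rule oscillator_energy_has_derivative[OF dx[OF that] dy[OF that]])
  then show "continuous_on {a..b} (\<lambda>r. oscillator_energy \<delta> \<kappa> (x r) (y r))"
    by (meson DERIV_isCont continuous_at_imp_continuous_on)
  fix r assume r: "a < r" "r \<le> b" and level: "oscillator_energy \<delta> \<kappa> (x r) (y r) = L * \<epsilon>\<^sup>2"
  have "- \<delta> * \<kappa> * (x r)\<^sup>2 - \<delta> * (y r)\<^sup>2 - (\<delta> * x r + 2 * y r) * R r < 0"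
    using R[OF _ level] r unfolding \<eta>_def
    by (intro oscillator_dissipation_neg[OF \<delta> \<kappa> \<epsilon> L level]) auto
  then have "E' r < 0"
    using r ab unfolding E'_def by (simp add: divide_neg_pos)
  with dE r show "((\<lambda>r. oscillator_energy \<delta> \<kappa> (x r) (y r)) has_real_derivative E' r) (at r) \<and> E' r < 0"
    by auto
qed

section \<open>Regular solutions\<close>

definition source :: "(real \<Rightarrow> real) \<Rightarrow> real \<Rightarrow> real \<Rightarrow> (real \<Rightarrow> real) \<Rightarrow> (real \<Rightarrow> real) \<Rightarrow> real \<Rightarrow> real"
  where "source K p \<mu> f u s = K s * max (u s) 0 powr p + \<mu> * f s"

definition radial_flux ::
  "nat \<Rightarrow> (real \<Rightarrow> real) \<Rightarrow> real \<Rightarrow> real \<Rightarrow> (real \<Rightarrow> real) \<Rightarrow> (real \<Rightarrow> real) \<Rightarrow> real \<Rightarrow> real"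
  where "radial_flux N K p \<mu> f u r = integral {0..r} (\<lambda>s. s powr (real N - 1) * source K p \<mu> f u s)"

lemma regular_solution_has_integral:
  assumes "regular_solution N K p \<mu> f \<zeta> u" and "r \<ge> 0"
  shows "((\<lambda>s. (s powr (2 - real N) - r powr (2 - real N)) / (real N - 2)
            * (s powr (real N - 1) * source K p \<mu> f u s)) has_integral (\<zeta> - u r)) {0..r}"
  using assms unfolding regular_solution_def source_def by (simp add: mult.assoc)

lemma regular_solution_at_0:
  assumes "regular_solution N K p \<mu> f \<zeta> u"
  shows "u 0 = \<zeta>"
proof -
  have "\<zeta> - u 0 = 0"
    using has_integral_unique[OF regular_solution_has_integral[OF assms order_refl]
        has_integral_refl(1)[of _ "0::real", unfolded cbox_interval]] .
  then show ?thesis by simp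
qed

lemma continuous_on_source:
  assumes "continuous_on {0<..} K" "continuous_on {0<..} f" "continuous_on {0<..} u" "p > 0"
  shows "continuous_on {0<..} (source K p \<mu> f u)"
  unfolding source_def
  by (intro continuous_intros continuous_on_powr' assms(1-3)) (use assms(4) in auto)

locale radial_solution =
  fixes N :: nat and K f u :: "real \<Rightarrow> real" and p \<mu> \<zeta> :: real
  assumes dim: "N \<ge> 3" and K_cont: "continuous_on {0<..} K" and f_cont: "continuous_on {0<..} f"
    and p_pos: "p > 0" and reg: "regular_solution N K p \<mu> f \<zeta> u"
begin

abbreviation "g \<equiv> source K p \<mu> f u"
abbreviation "flux \<equiv> radial_flux N K p \<mu> f u"

lemma dim_gt_2: "real N - 2 > 0"
  using dim by simp

lemma continuous_on_weighted_source: "continuous_on {0<..} (\<lambda>s. s powr (real N - 1) * g s)"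
proof -
  have "continuous_on {0..} u"
    using reg unfolding regular_solution_def by simp
  then have "continuous_on {0<..} u"
    by (rule continuous_on_subset) auto
  then show ?thesis
    by (intro continuous_intros continuous_on_source K_cont f_cont p_pos) auto
qed

lemma kernel_integrable:
  "r \<ge> 0 \<Longrightarrow> (\<lambda>s. (s powr (2 - real N) - r powr (2 - real N)) / (real N - 2)
            * (s powr (real N - 1) * g s)) integrable_on {0..r}"
  using regular_solution_has_integral[OF reg] by blast

text \<open>Subtracting the integral equations at \<open>c\<close> and \<open>2 c\<close> cancels the singular weight
  \<open>s powr (2 - N)\<close> and isolates the weighted source.\<close>
lemma weighted_source_integrable:
  assumes c: "c > 0"
  shows "(\<lambda>s. s powr (real N - 1) * g s) integrable_on {0..c}"
proof -
  define G where "G r s = (s powr (2 - real N) - r powr (2 - real N)) / (real N - 2)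
    * (s powr (real N - 1) * g s)" for r s
  define q where "q = (c powr (2 - real N) - (2*c) powr (2 - real N)) / (real N - 2)"
  have "(2*c) powr (2 - real N) < c powr (2 - real N)"
    using c dim by (intro powr_less_mono2_neg) auto
  then have q: "q > 0" using dim_gt_2 unfolding q_def by simp
  have "G c integrable_on {0..c}"
    using kernel_integrable c unfolding G_def by simp
  moreover have "G (2*c) integrable_on {0..2*c}"
    using kernel_integrable[of "2*c"] c unfolding G_def by simp
  then have "G (2*c) integrable_on {0..c}"
    by (rule integrable_subinterval_real) (use c in auto)
  ultimately have "(\<lambda>s. (G (2*c) s - G c s) / q) integrable_on {0..c}"
    by (intro integrable_on_divide integrable_diff)
  moreover have "(G (2*c) s - G c s) / q = s powr (real N - 1) * g s" for s
  proof -
    have "G (2*c) s - G c s = q * (s powr (real N - 1) * g s)"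
      unfolding G_def q_def by (simp add: diff_divide_distrib algebra_simps)
    then show ?thesis using q by simp
  qed
  ultimately show ?thesis by simp
qed

lemma has_real_derivative_flux:
  "r > 0 \<Longrightarrow> (flux has_real_derivative r powr (real N - 1) * g r) (at r)"
  unfolding radial_flux_def
  by (rule has_real_derivative_integral_from[OF continuous_on_weighted_source
        weighted_source_integrable])

lemma first_kernel_term_integrable:
  assumes r: "r > 0"
  shows "(\<lambda>s. s powr (2 - real N) * (s powr (real N - 1) * g s)) integrable_on {0..r}"
proof -
  define H where "H s = s powr (real N - 1) * g s" for s
  have "(\<lambda>s. (s powr (2 - real N) - r powr (2 - real N)) / (real N - 2) * H s) integrable_on {0..r}"
    using kernel_integrable r unfolding H_def by simp
  then have "(\<lambda>s. (real N - 2) * ((s powr (2 - real N) - r powr (2 - real N)) / (real N - 2) * H s)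
              + r powr (2 - real N) * H s) integrable_on {0..r}"
    using weighted_source_integrable[OF r] dim_gt_2 r unfolding H_def[symmetric]
    by (intro integrable_add) simp_all
  moreover have "(real N - 2) * ((s powr (2 - real N) - r powr (2 - real N)) / (real N - 2) * H s)
              + r powr (2 - real N) * H s = s powr (2 - real N) * H s" for s
    using dim_gt_2 by (simp add: field_simps)
  ultimately show ?thesis
    unfolding H_def by simp
qed

lemma split_integral_equation:
  assumes r: "r > 0"
  shows "u r = \<zeta> - (integral {0..r} (\<lambda>s. s powr (2 - real N) * (s powr (real N - 1) * g s))
                     - r powr (2 - real N) * flux r) / (real N - 2)"
proof -
  have "(\<lambda>s. (s powr (2 - real N) - r powr (2 - real N)) / (real N - 2)
            * (s powr (real N - 1) * g s))
      = (\<lambda>s. (s powr (2 - real N) * (s powr (real N - 1) * g s)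
            - r powr (2 - real N) * (s powr (real N - 1) * g s)) / (real N - 2))"
    by (auto simp: field_simps)
  then have "\<zeta> - u r = (integral {0..r} (\<lambda>s. s powr (2 - real N) * (s powr (real N - 1) * g s))
                     - r powr (2 - real N) * flux r) / (real N - 2)"
    using integral_unique[OF regular_solution_has_integral[OF reg, of r]] r
      first_kernel_term_integrable[OF r] weighted_source_integrable[OF r]
    unfolding radial_flux_def by (simp add: integral_diff integrable_on_cmult_left)
  then show ?thesis by simp
qed

lemma u_has_real_derivative:
  assumes r: "r > 0"
  shows "(u has_real_derivative - (r powr (1 - real N)) * flux r) (at r)"
proof -
  define J where "J r = integral {0..r} (\<lambda>s. s powr (2 - real N) * (s powr (real N - 1) * g s))"
    for r
  have "(J has_real_derivative r powr (2 - real N) * (r powr (real N - 1) * g r)) (at r)"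
    unfolding J_def using r
    by (intro has_real_derivative_integral_from first_kernel_term_integrable continuous_intros
        continuous_on_weighted_source) auto
  then have "((\<lambda>r. \<zeta> - (J r - r powr (2 - real N) * flux r) / (real N - 2)) has_real_derivative
      - (r powr (2 - real N) * (r powr (real N - 1) * g r)
         - ((2 - real N) * r powr (2 - real N - 1) * flux r
            + r powr (2 - real N) * (r powr (real N - 1) * g r))) / (real N - 2)) (at r)"
    using r dim by (auto intro!: derivative_eq_intros has_real_derivative_flux)
  moreover have "- (r powr (2 - real N) * (r powr (real N - 1) * g r)
         - ((2 - real N) * r powr (2 - real N - 1) * flux r
            + r powr (2 - real N) * (r powr (real N - 1) * g r))) / (real N - 2)
      = - (r powr (1 - real N)) * flux r"
    using dim_gt_2 by (simp add: field_simps)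
  ultimately have "((\<lambda>r. \<zeta> - (J r - r powr (2 - real N) * flux r) / (real N - 2)) has_real_derivative
      - (r powr (1 - real N)) * flux r) (at r)"
    by simp
  then show ?thesis
  proof (rule has_field_derivative_transform_within_open[where S = "{0<..}"])
    show "\<zeta> - (J x - x powr (2 - real N) * flux x) / (real N - 2) = u x" if "x \<in> {0<..}" for x
      unfolding J_def by (rule sym, rule split_integral_equation) (use that in simp)
  qed (use r in auto)
qed

lemma flux_nonneg:
  assumes g_nonneg: "\<And>s. s > 0 \<Longrightarrow> g s \<ge> 0" and r: "r > 0"
  shows "flux r \<ge> 0"
  unfolding radial_flux_def
proof (rule integral_nonneg[OF weighted_source_integrable[OF r]])
  show "s powr (real N - 1) * g s \<ge> 0" if "s \<in> {0..r}" for s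
    using that g_nonneg[of s] by (cases "s = 0") auto
qed

lemma u_nonincreasing:
  assumes g_nonneg: "\<And>s. s > 0 \<Longrightarrow> g s \<ge> 0" and "0 < r" "r \<le> r'"
  shows "u r' \<le> u r"
proof (rule DERIV_nonpos_imp_nonincreasing[OF \<open>r \<le> r'\<close>])
  fix t assume "r \<le> t" "t \<le> r'"
  then have t: "t > 0" using \<open>0 < r\<close> by simp
  show "\<exists>y. (u has_real_derivative y) (at t) \<and> y \<le> 0"
    using u_has_real_derivative[OF t] flux_nonneg[OF g_nonneg t] by auto
qed

text \<open>\<open>r\<close> times the derivative of \<open>r\<^sup>\<theta> u\<close>, written through the flux so that no derivative
  of \<open>u\<close> is needed.\<close>
definition ef_velocity :: "real \<Rightarrow> real \<Rightarrow> real"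
  where "ef_velocity \<theta> r = \<theta> * (r powr \<theta> * u r) - r powr (\<theta> + 2 - real N) * flux r"

lemma has_real_derivative_scaled:
  assumes r: "r > 0"
  shows "((\<lambda>r. r powr \<theta> * u r) has_real_derivative ef_velocity \<theta> r / r) (at r)"
proof -
  have "((\<lambda>r. r powr \<theta> * u r) has_real_derivative
      \<theta> * r powr (\<theta> - 1) * u r + r powr \<theta> * (- (r powr (1 - real N)) * flux r)) (at r)"
    using r by (auto intro!: derivative_eq_intros u_has_real_derivative)
  moreover have "r powr (\<theta> - 1) = r powr \<theta> / r"
    using r by (rule powr_diff_one)
  moreover have "r powr \<theta> * r powr (1 - real N) = r powr (\<theta> + 2 - real N) / r"
    by (rule powr_mult_powr_eq_powr_div) (use r in auto)
  then have "r powr \<theta> * (- (r powr (1 - real N)) * flux r) = - (r powr (\<theta> + 2 - real N) / r * flux r)"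
    by (metis minus_mult_left minus_mult_right mult.assoc)
  ultimately show ?thesis
    unfolding ef_velocity_def by (simp add: diff_divide_distrib mult.assoc)
qed

lemma has_real_derivative_ef_velocity:
  assumes r: "r > 0"
  shows "(ef_velocity \<theta> has_real_derivative
      (\<theta> * ef_velocity \<theta> r + (real N - 2 - \<theta>) * (\<theta> * (r powr \<theta> * u r) - ef_velocity \<theta> r)
        - r powr (\<theta> + 2) * g r) / r) (at r)"
proof -
  have "((\<lambda>r. r powr (\<theta> + 2 - real N) * flux r) has_real_derivative
      (\<theta> + 2 - real N) * r powr (\<theta> + 2 - real N - 1) * flux r
         + r powr (\<theta> + 2 - real N) * (r powr (real N - 1) * g r)) (at r)"
    using r by (auto intro!: derivative_eq_intros has_real_derivative_flux)
  from DERIV_diff[OF DERIV_cmult[OF has_real_derivative_scaled[OF r]] this]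
  have "(ef_velocity \<theta> has_real_derivative \<theta> * (ef_velocity \<theta> r / r)
      - ((\<theta> + 2 - real N) * r powr (\<theta> + 2 - real N - 1) * flux r
         + r powr (\<theta> + 2 - real N) * (r powr (real N - 1) * g r))) (at r)"
    unfolding ef_velocity_def[abs_def] .
  moreover have "r powr (\<theta> + 2 - real N - 1) = r powr (\<theta> + 2 - real N) / r"
    using r by (rule powr_diff_one)
  moreover have "r powr (\<theta> + 2 - real N) * r powr (real N - 1) = r powr (\<theta> + 2) / r"
    by (rule powr_mult_powr_eq_powr_div) (use r in auto)
  then have "r powr (\<theta> + 2 - real N) * (r powr (real N - 1) * g r) = r powr (\<theta> + 2) / r * g r"
    by (metis mult.assoc)
  ultimately have "(ef_velocity \<theta> has_real_derivative (\<theta> * ef_velocity \<theta> r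
      + (real N - 2 - \<theta>) * (r powr (\<theta> + 2 - real N) * flux r) - r powr (\<theta> + 2) * g r) / r) (at r)"
    by (simp add: diff_divide_distrib add_divide_distrib algebra_simps)
  moreover have "r powr (\<theta> + 2 - real N) * flux r = \<theta> * (r powr \<theta> * u r) - ef_velocity \<theta> r"
    unfolding ef_velocity_def by simp
  ultimately show ?thesis
    by simp
qed

end

section \<open>Trapping near the singular solution\<close>

locale supercritical =
  fixes N :: nat and \<alpha> p k0 :: real
  assumes N_ge_3: "N \<ge> 3" and alpha_gt: "\<alpha> > -2" and k0_pos: "k0 > 0" and p_gt_pS: "p > pS N \<alpha>"
begin

abbreviation "\<theta> \<equiv> theta \<alpha> p"
abbreviation "\<gamma> \<equiv> gam N k0 \<alpha> p"
abbreviation "\<delta> \<equiv> real N - 2 - 2 * \<theta>"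
abbreviation "\<kappa> \<equiv> (p - 1) * \<theta> * (real N - 2 - \<theta>)"
abbreviation "\<eta> \<equiv> perturbation_tolerance \<delta> \<kappa>"

text \<open>The hypotheses at \<open>r\<^sub>1\<close> give \<open>\<bar>x\<bar> \<le> \<epsilon>\<close> and \<open>\<bar>y\<bar> \<le> (1 + \<theta>) \<epsilon>\<close>, hence energy at most
  \<open>\<Lambda> \<epsilon>\<^sup>2 / 2\<close>; on the level \<open>\<Lambda> \<epsilon>\<^sup>2\<close> one has \<open>\<bar>x\<bar>, \<bar>y\<bar> \<le> \<beta> \<epsilon>\<close>.\<close>
definition \<Lambda> :: real
  where "\<Lambda> = 2 * (\<kappa> + \<delta>\<^sup>2 / 2 + \<delta> + 1) * (1 + (\<theta> + 1)\<^sup>2)"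

definition \<beta> :: real
  where "\<beta> = 1 + \<Lambda> / min \<kappa> (1/2)"

lemma p_gt_1: "p > 1"
proof -
  have "pS N \<alpha> - 1 = (4 + 2 * \<alpha>) / (real N - 2)"
    using N_ge_3 unfolding pS_def by (simp add: field_simps)
  also have "\<dots> > 0"
    using alpha_gt N_ge_3 by simp
  finally show ?thesis
    using p_gt_pS by linarith
qed

lemma theta_pos: "\<theta> > 0"
  using p_gt_1 alpha_gt unfolding theta_def by simp

lemma theta_mult: "\<theta> * (p - 1) = 2 + \<alpha>"
  using p_gt_1 unfolding theta_def by simp

lemma delta_pos: "\<delta> > 0"
proof -
  have "(pS N \<alpha> - 1) * (real N - 2) = 4 + 2 * \<alpha>"
    using N_ge_3 unfolding pS_def by (simp add: field_simps)
  moreover have "(pS N \<alpha> - 1) * (real N - 2) < (p - 1) * (real N - 2)"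
    using p_gt_pS N_ge_3 by (intro mult_strict_right_mono) auto
  ultimately have "2 * (2 + \<alpha>) < (p - 1) * (real N - 2)"
    by simp
  then show ?thesis
    using p_gt_1 unfolding theta_def by (simp add: field_simps)
qed

lemma N_minus_theta_pos: "real N - 2 - \<theta> > 0"
  using delta_pos theta_pos by simp

lemma kappa_pos: "\<kappa> > 0"
  using p_gt_1 theta_pos delta_pos by simp

lemma gam_pos: "\<gamma> > 0"
  using k0_pos theta_pos delta_pos unfolding gam_def by simp

lemma k0_gam_powr: "k0 * \<gamma> powr (p - 1) = \<theta> * (real N - 2 - \<theta>)"
proof -
  have "\<gamma> powr (p - 1) = k0 powr (-1) * (\<theta> * (real N - 2 - \<theta>))"
    unfolding gam_def using p_gt_1 k0_pos theta_pos N_minus_theta_pos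
    by (simp add: powr_mult powr_powr)
  then show ?thesis
    using k0_pos by (simp add: powr_minus)
qed

lemma eta_pos: "\<eta> > 0"
  unfolding perturbation_tolerance_def using delta_pos kappa_pos by simp

lemma source_error_small:
  fixes K f :: "real \<Rightarrow> real"
  assumes K_asym: "((\<lambda>r. K r / r powr \<alpha>) \<longlongrightarrow> k0) (at_right 0)"
    and f_asym: "f \<in> O[at_right 0](\<lambda>r. r powr \<nu>)" and nu: "\<nu> > -2" and c: "c > 0"
  shows "\<exists>\<rho>>0. \<forall>r. 0 < r \<and> r \<le> \<rho> \<longrightarrow>
    \<bar>K r / r powr \<alpha> - k0\<bar> * (2 * \<gamma>) powr p + \<mu> * (r powr (\<theta> + 2) * \<bar>f r\<bar>) < c"
proof -
  have "((\<lambda>r. K r / r powr \<alpha> - k0) \<longlongrightarrow> 0) (at_right 0)"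
    using K_asym by (rule LIM_zero)
  moreover have "((\<lambda>r. r powr (\<theta> + 2) * \<bar>f r\<bar>) \<longlongrightarrow> 0) (at_right 0)"
    using theta_pos nu by (intro tendsto_powr_mult_bigo_zero[OF f_asym]) simp
  ultimately have "((\<lambda>r. \<bar>K r / r powr \<alpha> - k0\<bar> * (2 * \<gamma>) powr p
      + \<mu> * (r powr (\<theta> + 2) * \<bar>f r\<bar>)) \<longlongrightarrow> 0) (at_right 0)"
    by (intro tendsto_add_zero tendsto_mult_left_zero tendsto_mult_right_zero tendsto_rabs_zero)
  then have "eventually (\<lambda>r. \<bar>K r / r powr \<alpha> - k0\<bar> * (2 * \<gamma>) powr p
      + \<mu> * (r powr (\<theta> + 2) * \<bar>f r\<bar>) < c) (at_right 0)"
    using c by (rule order_tendstoD(2))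
  then obtain b where "b > 0" and "\<And>r. 0 < r \<Longrightarrow> r < b \<Longrightarrow>
      \<bar>K r / r powr \<alpha> - k0\<bar> * (2 * \<gamma>) powr p + \<mu> * (r powr (\<theta> + 2) * \<bar>f r\<bar>) < c"
    unfolding eventually_at_right_field by auto
  then show ?thesis
    by (intro exI[of _ "b / 2"]) auto
qed

lemma linearization_radius:
  "\<exists>h>0. h \<le> \<gamma> / 2 \<and> (\<forall>w. \<bar>w - \<gamma>\<bar> < h \<longrightarrow>
     \<bar>k0 * w powr p - k0 * \<gamma> powr p - k0 * p * \<gamma> powr (p - 1) * (w - \<gamma>)\<bar> \<le> \<eta> * \<bar>w - \<gamma>\<bar>)"
proof -
  obtain d where "d > 0" and "\<forall>w. \<bar>w - \<gamma>\<bar> < d \<longrightarrow>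
      \<bar>k0 * w powr p - k0 * \<gamma> powr p - k0 * p * \<gamma> powr (p - 1) * (w - \<gamma>)\<bar> \<le> \<eta> * \<bar>w - \<gamma>\<bar>"
    using powr_linear_approx[OF gam_pos eta_pos] by blast
  then show ?thesis
    using gam_pos by (intro exI[of _ "min d (\<gamma> / 2)"]) auto
qed

lemma energy_constant_pos: "\<kappa> + \<delta>\<^sup>2 / 2 + \<delta> + 1 > 0"
  using kappa_pos delta_pos zero_le_power2[of \<delta>] by argo

lemma Lambda_pos: "\<Lambda> > 0"
  unfolding \<Lambda>_def using energy_constant_pos by (simp add: add_pos_nonneg)

lemma Lambda_ge: "\<Lambda> \<ge> 2 * (\<kappa> + \<delta>\<^sup>2 / 2 + \<delta> + 1)"
proof -
  have "2 * (\<kappa> + \<delta>\<^sup>2 / 2 + \<delta> + 1) * 1 \<le> \<Lambda>"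
    unfolding \<Lambda>_def using energy_constant_pos by (intro mult_left_mono) auto
  then show ?thesis
    by simp
qed

lemma beta_pos: "\<beta> > 0"
proof -
  have "\<Lambda> / min \<kappa> (1/2) > 0"
    using Lambda_pos kappa_pos by simp
  then show ?thesis
    unfolding \<beta>_def by simp
qed

end

locale supercritical_solution =
  supercritical N \<alpha> p k0 + radial_solution N K f u p \<mu> \<zeta>
  for N :: nat and \<alpha> p k0 :: real and K f u :: "real \<Rightarrow> real" and \<mu> \<zeta> :: real +
  assumes mu_nonneg: "\<mu> \<ge> 0" and K_pos: "\<And>r. r > 0 \<Longrightarrow> K r > 0"
    and f_nonneg: "\<And>r. r > 0 \<Longrightarrow> f r \<ge> 0"
begin

abbreviation "ef_x r \<equiv> r powr \<theta> * u r - \<gamma>"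
abbreviation "ef_y \<equiv> ef_velocity \<theta>"

text \<open>The scaled nonlinearity minus its linearisation \<open>k0 \<gamma> powr p + k0 p \<gamma> powr (p - 1) x\<close> at the
  singular solution, rewritten with \<open>k0_gam_powr\<close>.\<close>
definition ef_remainder :: "real \<Rightarrow> real"
  where "ef_remainder r = r powr (\<theta> + 2) * g r - \<theta> * (real N - 2 - \<theta>) * \<gamma>
    - p * \<theta> * (real N - 2 - \<theta>) * ef_x r"

lemma source_nonneg: "s > 0 \<Longrightarrow> g s \<ge> 0"
  unfolding source_def using K_pos[of s] f_nonneg[of s] mu_nonneg by simp

lemma has_real_derivative_ef_x: "r > 0 \<Longrightarrow> ((\<lambda>r. ef_x r) has_real_derivative ef_y r / r) (at r)"
  using DERIV_diff[OF has_real_derivative_scaled[of r \<theta>] DERIV_const[of \<gamma>]] by simp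

lemma has_real_derivative_ef_y:
  assumes r: "r > 0"
  shows "(ef_y has_real_derivative (- \<kappa> * ef_x r - \<delta> * ef_y r - ef_remainder r) / r) (at r)"
proof -
  have "\<theta> * ef_y r + (real N - 2 - \<theta>) * (\<theta> * (r powr \<theta> * u r) - ef_y r) - r powr (\<theta> + 2) * g r
      = - \<kappa> * ef_x r - \<delta> * ef_y r - ef_remainder r"
    unfolding ef_remainder_def by (simp add: algebra_simps)
  then show ?thesis
    using has_real_derivative_ef_velocity[OF r, of \<theta>] by simp
qed

lemma scaled_source_eq:
  assumes r: "r > 0" and u: "u r > 0"
  shows "r powr (\<theta> + 2) * g r
    = K r / r powr \<alpha> * (r powr \<theta> * u r) powr p + \<mu> * (r powr (\<theta> + 2) * f r)"
proof -
  have "r powr (\<theta> + 2) * u r powr p = r powr (\<theta> + 2 - \<theta> * p) * (r powr \<theta> * u r) powr p"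
    using r u by (simp add: powr_mult powr_powr powr_add[symmetric])
  also have "\<theta> + 2 - \<theta> * p = - \<alpha>"
    using theta_mult by (simp add: algebra_simps)
  finally show ?thesis
    unfolding source_def using r u by (simp add: powr_minus divide_inverse algebra_simps)
qed

lemma ef_remainder_bound:
  assumes lin: "\<And>w. \<bar>w - \<gamma>\<bar> < h \<Longrightarrow>
      \<bar>k0 * w powr p - k0 * \<gamma> powr p - k0 * p * \<gamma> powr (p - 1) * (w - \<gamma>)\<bar> \<le> \<eta> * \<bar>w - \<gamma>\<bar>"
    and h: "h \<le> \<gamma> / 2" and r: "r > 0" and x: "\<bar>ef_x r\<bar> < h"
  shows "\<bar>ef_remainder r\<bar> \<le> \<eta> * \<bar>ef_x r\<bar>
    + (\<bar>K r / r powr \<alpha> - k0\<bar> * (2 * \<gamma>) powr p + \<mu> * (r powr (\<theta> + 2) * \<bar>f r\<bar>))"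
proof -
  define w where "w = r powr \<theta> * u r"
  have w: "0 < w" "w \<le> 2 * \<gamma>"
    using x h gam_pos unfolding w_def by auto
  then have "u r > 0"
    using r unfolding w_def by (simp add: zero_less_mult_iff)
  have c0: "k0 * \<gamma> powr p = \<theta> * (real N - 2 - \<theta>) * \<gamma>"
    using k0_gam_powr gam_pos by (simp add: powr_diff field_simps)
  have c1: "k0 * p * \<gamma> powr (p - 1) = p * \<theta> * (real N - 2 - \<theta>)"
    using k0_gam_powr by simp
  have "ef_remainder r = (k0 * w powr p - k0 * \<gamma> powr p - k0 * p * \<gamma> powr (p - 1) * (w - \<gamma>))
      + ((K r / r powr \<alpha> - k0) * w powr p + \<mu> * (r powr (\<theta> + 2) * f r))"
    unfolding ef_remainder_def scaled_source_eq[OF r \<open>u r > 0\<close>] w_def[symmetric] c0 c1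
    by (simp add: algebra_simps)
  moreover have "\<bar>k0 * w powr p - k0 * \<gamma> powr p - k0 * p * \<gamma> powr (p - 1) * (w - \<gamma>)\<bar>
      \<le> \<eta> * \<bar>ef_x r\<bar>"
    using lin[of w] x unfolding w_def by simp
  moreover have "\<bar>(K r / r powr \<alpha> - k0) * w powr p\<bar> \<le> \<bar>K r / r powr \<alpha> - k0\<bar> * (2 * \<gamma>) powr p"
    using w p_gt_1 by (simp add: abs_mult mult_left_mono powr_mono2)
  moreover have "\<bar>\<mu> * (r powr (\<theta> + 2) * f r)\<bar> = \<mu> * (r powr (\<theta> + 2) * \<bar>f r\<bar>)"
    using mu_nonneg by (simp add: abs_mult)
  ultimately show ?thesis
    by (smt (verit) abs_triangle_ineq)
qed

lemma u_eq_ef_x: "r > 0 \<Longrightarrow> u r - \<gamma> * r powr (- \<theta>) = r powr (- \<theta>) * ef_x r"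
  by (simp add: powr_minus field_simps)

lemma deriv_eq_ef_y:
  assumes r: "r > 0"
  shows "deriv u r + \<theta> * \<gamma> * r powr (-1 - \<theta>) = r powr (-1 - \<theta>) * (ef_y r - \<theta> * ef_x r)"
proof -
  have "r powr (-1 - \<theta>) * r powr (\<theta> + 2 - real N) = r powr (1 - real N)"
    using r by (simp add: powr_add[symmetric])
  then show ?thesis
    using DERIV_imp_deriv[OF u_has_real_derivative[OF r]]
    unfolding ef_velocity_def by (simp add: algebra_simps)
qed

abbreviation "ef_energy r \<equiv> oscillator_energy \<delta> \<kappa> (ef_x r) (ef_y r)"

lemma ef_bounds_of_energy_le:
  assumes "\<epsilon> \<ge> 0" and "ef_energy r \<le> \<Lambda> * \<epsilon>\<^sup>2"
  shows "\<bar>ef_x r\<bar> \<le> \<beta> * \<epsilon>" "\<bar>ef_y r\<bar> \<le> \<beta> * \<epsilon>"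
  using abs_le_of_oscillator_energy_le[OF kappa_pos less_imp_le[OF Lambda_pos] assms]
  unfolding \<beta>_def by auto

lemma ef_energy_start:
  assumes r1: "r1 > 0" and \<epsilon>: "\<epsilon> > 0"
    and start_u: "\<bar>u r1 - \<gamma> * r1 powr (- \<theta>)\<bar> \<le> \<epsilon> * r1 powr (- \<theta>)"
    and start_du: "\<bar>deriv u r1 + \<theta> * \<gamma> * r1 powr (-1 - \<theta>)\<bar> \<le> \<epsilon> * r1 powr (-1 - \<theta>)"
  shows "ef_energy r1 < \<Lambda> * \<epsilon>\<^sup>2"
proof -
  have x: "\<bar>ef_x r1\<bar> \<le> \<epsilon>"
    using start_u r1 unfolding u_eq_ef_x[OF r1] by (simp add: abs_mult mult.commute)
  have "\<bar>ef_y r1 - \<theta> * ef_x r1\<bar> \<le> \<epsilon>"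
    using start_du r1 unfolding deriv_eq_ef_y[OF r1] by (simp add: abs_mult mult.commute)
  moreover have "\<bar>ef_y r1\<bar> \<le> \<bar>ef_y r1 - \<theta> * ef_x r1\<bar> + \<bar>\<theta> * ef_x r1\<bar>"
    using abs_triangle_ineq[of "ef_y r1 - \<theta> * ef_x r1" "\<theta> * ef_x r1"] by simp
  moreover have "\<bar>\<theta> * ef_x r1\<bar> \<le> \<theta> * \<epsilon>"
    using x theta_pos by (simp add: abs_mult mult_left_mono)
  ultimately have "\<bar>ef_y r1\<bar> \<le> (1 + \<theta>) * \<epsilon>"
    by (simp add: distrib_right)
  define C where "C = \<kappa> + \<delta>\<^sup>2 / 2 + \<delta> + 1"
  have "ef_energy r1 \<le> C * ((ef_x r1)\<^sup>2 + (ef_y r1)\<^sup>2)"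
    unfolding C_def using delta_pos kappa_pos by (intro oscillator_energy_le) simp_all
  also have "\<dots> \<le> C * (\<epsilon>\<^sup>2 + ((1 + \<theta>) * \<epsilon>)\<^sup>2)"
    using x \<open>\<bar>ef_y r1\<bar> \<le> (1 + \<theta>) * \<epsilon>\<close> energy_constant_pos unfolding C_def
    by (intro mult_left_mono add_mono) (auto simp: abs_le_square_iff[symmetric])
  also have "\<epsilon>\<^sup>2 + ((1 + \<theta>) * \<epsilon>)\<^sup>2 = (1 + (\<theta> + 1)\<^sup>2) * \<epsilon>\<^sup>2"
    unfolding power_mult_distrib by (simp add: add.commute distrib_right)
  also have "C * ((1 + (\<theta> + 1)\<^sup>2) * \<epsilon>\<^sup>2) = \<Lambda> * \<epsilon>\<^sup>2 / 2"
    unfolding C_def \<Lambda>_def by simp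
  also have "\<dots> < \<Lambda> * \<epsilon>\<^sup>2"
    using mult_pos_pos[OF Lambda_pos zero_less_power[OF \<epsilon>, of 2]] by linarith
  finally show ?thesis .
qed

lemma ef_energy_trapped:
  assumes lin: "\<And>w. \<bar>w - \<gamma>\<bar> < h \<Longrightarrow>
      \<bar>k0 * w powr p - k0 * \<gamma> powr p - k0 * p * \<gamma> powr (p - 1) * (w - \<gamma>)\<bar> \<le> \<eta> * \<bar>w - \<gamma>\<bar>"
    and h: "h \<le> \<gamma> / 2" and \<epsilon>: "\<epsilon> > 0" "\<beta> * \<epsilon> < h"
    and small: "\<And>r. 0 < r \<Longrightarrow> r \<le> \<rho> \<Longrightarrow>
      \<bar>K r / r powr \<alpha> - k0\<bar> * (2 * \<gamma>) powr p + \<mu> * (r powr (\<theta> + 2) * \<bar>f r\<bar>) < 2 * \<eta> * \<epsilon>"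
    and r1: "0 < r1" "r1 \<le> \<rho>" and start: "ef_energy r1 < \<Lambda> * \<epsilon>\<^sup>2"
  shows "\<forall>r\<in>{r1..\<rho>}. ef_energy r \<le> \<Lambda> * \<epsilon>\<^sup>2"
proof (rule oscillator_energy_trapped[where x = "\<lambda>r. ef_x r" and y = ef_y and R = ef_remainder,
      OF delta_pos kappa_pos \<epsilon>(1) Lambda_ge r1 _ _ _ start])
  fix r assume r: "r \<in> {r1..\<rho>}"
  then have "r > 0" using r1 by simp
  show "((\<lambda>r. ef_x r) has_real_derivative ef_y r / r) (at r)"
    using has_real_derivative_ef_x[OF \<open>r > 0\<close>] .
  show "(ef_y has_real_derivative (- \<kappa> * ef_x r - \<delta> * ef_y r - ef_remainder r) / r) (at r)"
    using has_real_derivative_ef_y[OF \<open>r > 0\<close>] .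
next
  fix r assume r: "r \<in> {r1<..\<rho>}" and level: "ef_energy r = \<Lambda> * \<epsilon>\<^sup>2"
  then have "r > 0" using r1 by simp
  have "\<bar>ef_x r\<bar> < h"
    using ef_bounds_of_energy_le[of \<epsilon> r] level \<epsilon> by simp
  then show "\<bar>ef_remainder r\<bar> \<le> \<eta> * \<bar>ef_x r\<bar> + 2 * \<eta> * \<epsilon>"
    using ef_remainder_bound[OF lin h \<open>r > 0\<close>] small[OF \<open>r > 0\<close>] r by fastforce
qed

lemma positive_of_energy_le:
  assumes r: "r > 0" and \<epsilon>: "\<epsilon> \<ge> 0" "\<beta> * \<epsilon> < h" and h: "h \<le> \<gamma> / 2"
    and E: "ef_energy r \<le> \<Lambda> * \<epsilon>\<^sup>2"
  shows "u r > 0"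
proof -
  have "r powr \<theta> * u r > 0"
    using ef_bounds_of_energy_le(1)[OF \<epsilon>(1) E] \<epsilon> h gam_pos by linarith
  then show ?thesis
    using r by (simp add: zero_less_mult_iff)
qed

lemma positive_below:
  assumes "\<zeta> > 0" "u r1 > 0" "0 \<le> r" "r \<le> r1"
  shows "u r > 0"
proof (cases "r = 0")
  case True
  then show ?thesis using regular_solution_at_0[OF reg] assms by simp
next
  case False
  then have "u r1 \<le> u r"
    using assms by (intro u_nonincreasing source_nonneg) auto
  then show ?thesis using assms by simp
qed

lemma estimates_of_energy_le:
  assumes r: "r > 0" and \<epsilon>: "\<epsilon> \<ge> 0" and E: "ef_energy r \<le> \<Lambda> * \<epsilon>\<^sup>2"
  shows "\<bar>u r - \<gamma> * r powr (- \<theta>)\<bar> \<le> (1 + \<theta>) * \<beta> * \<epsilon> * r powr (- \<theta>)"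
    and "\<bar>deriv u r + \<theta> * \<gamma> * r powr (-1 - \<theta>)\<bar> \<le> (1 + \<theta>) * \<beta> * \<epsilon> * r powr (-1 - \<theta>)"
proof -
  note bounds = ef_bounds_of_energy_le[OF \<epsilon> E]
  have "0 \<le> \<theta> * (\<beta> * \<epsilon>)"
    by (meson less_imp_le mult_nonneg_nonneg theta_pos beta_pos \<epsilon>)
  moreover have "(1 + \<theta>) * \<beta> * \<epsilon> = \<beta> * \<epsilon> + \<theta> * (\<beta> * \<epsilon>)"
    by (simp add: algebra_simps)
  ultimately have "\<bar>ef_x r\<bar> \<le> (1 + \<theta>) * \<beta> * \<epsilon>"
    using bounds(1) by linarith
  then show "\<bar>u r - \<gamma> * r powr (- \<theta>)\<bar> \<le> (1 + \<theta>) * \<beta> * \<epsilon> * r powr (- \<theta>)"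
    unfolding u_eq_ef_x[OF r] using r by (simp add: abs_mult mult.commute mult_left_mono)
  have "\<bar>ef_y r - \<theta> * ef_x r\<bar> \<le> \<bar>ef_y r\<bar> + \<theta> * \<bar>ef_x r\<bar>"
    using abs_triangle_ineq4[of "ef_y r" "\<theta> * ef_x r"] theta_pos by (simp add: abs_mult)
  also have "\<dots> \<le> \<beta> * \<epsilon> + \<theta> * (\<beta> * \<epsilon>)"
    using bounds theta_pos by (intro add_mono mult_left_mono) auto
  finally have "\<bar>ef_y r - \<theta> * ef_x r\<bar> \<le> (1 + \<theta>) * \<beta> * \<epsilon>"
    by (simp add: algebra_simps)
  then show "\<bar>deriv u r + \<theta> * \<gamma> * r powr (-1 - \<theta>)\<bar> \<le> (1 + \<theta>) * \<beta> * \<epsilon> * r powr (-1 - \<theta>)"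
    unfolding deriv_eq_ef_y[OF r] using r by (simp add: abs_mult mult.commute mult_left_mono)
qed

lemma stays_near_singular_solution:
  assumes lin: "\<And>w. \<bar>w - \<gamma>\<bar> < h \<Longrightarrow>
      \<bar>k0 * w powr p - k0 * \<gamma> powr p - k0 * p * \<gamma> powr (p - 1) * (w - \<gamma>)\<bar> \<le> \<eta> * \<bar>w - \<gamma>\<bar>"
    and h: "h \<le> \<gamma> / 2" and \<epsilon>: "\<epsilon> > 0" "\<beta> * \<epsilon> < h"
    and small: "\<And>r. 0 < r \<Longrightarrow> r \<le> \<rho> \<Longrightarrow>
      \<bar>K r / r powr \<alpha> - k0\<bar> * (2 * \<gamma>) powr p + \<mu> * (r powr (\<theta> + 2) * \<bar>f r\<bar>) < 2 * \<eta> * \<epsilon>"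
    and \<zeta>: "\<zeta> > 0" and r1: "0 < r1" "r1 < \<rho>"
    and start_u: "\<bar>u r1 - \<gamma> * r1 powr (- \<theta>)\<bar> \<le> \<epsilon> * r1 powr (- \<theta>)"
    and start_du: "\<bar>deriv u r1 + \<theta> * \<gamma> * r1 powr (-1 - \<theta>)\<bar> \<le> \<epsilon> * r1 powr (-1 - \<theta>)"
  shows "(\<forall>r\<in>{0..\<rho>}. u r > 0) \<and>
    (\<forall>r. r1 < r \<and> r \<le> \<rho> \<longrightarrow>
      \<bar>u r - \<gamma> * r powr (- \<theta>)\<bar> \<le> (1 + \<theta>) * \<beta> * \<epsilon> * r powr (- \<theta>) \<and>
      \<bar>deriv u r + \<theta> * \<gamma> * r powr (-1 - \<theta>)\<bar> \<le> (1 + \<theta>) * \<beta> * \<epsilon> * r powr (-1 - \<theta>))"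
proof -
  have trapped: "ef_energy r \<le> \<Lambda> * \<epsilon>\<^sup>2" if "r1 \<le> r" "r \<le> \<rho>" for r
    using ef_energy_trapped[OF lin h \<epsilon> small r1(1)] ef_energy_start[OF r1(1) \<epsilon>(1) start_u start_du]
      r1 that by simp
  have right: "u r > 0" if "r1 \<le> r" "r \<le> \<rho>" for r
    using positive_of_energy_le[OF _ _ \<epsilon>(2) h trapped[OF that]] r1 \<epsilon> that by simp
  have "u r > 0" if "0 \<le> r" "r \<le> \<rho>" for r
    using right[of r] positive_below[OF \<zeta> right[of r1]] r1 that by (cases "r1 \<le> r") auto
  moreover note estimates_of_energy_le[OF _ less_imp_le[OF \<epsilon>(1)] trapped]
  ultimately show ?thesis
    using r1 by auto
qed

end

theorem lemma3p6:
  fixes N :: nat and \<mu> p \<alpha> k0 \<nu> :: real and K f :: "real \<Rightarrow> real"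
  assumes N: "N \<ge> 3"
    and mu: "\<mu> \<ge> 0"
    and K_cont: "continuous_on {0<..} K"
    and K_pos: "\<And>r. r > 0 \<Longrightarrow> K r > 0"
    and alpha: "\<alpha> > -2" and k0: "k0 > 0"
    and K_asym: "((\<lambda>r. K r / r powr \<alpha>) \<longlongrightarrow> k0) (at_right 0)"
    and f_cont: "continuous_on {0<..} f"
    and f_nonneg: "\<And>r. r > 0 \<Longrightarrow> f r \<ge> 0"
    and f_nonzero: "\<exists>r>0. f r \<noteq> 0"
    and nu: "\<nu> > -2"
    and f_asym: "f \<in> O[at_right 0](\<lambda>r. r powr \<nu>)"
    and p: "p > pS N \<alpha>"
  shows "\<exists>\<epsilon>0>0. \<exists>C0>0. \<forall>\<epsilon>. 0 < \<epsilon> \<and> \<epsilon> \<le> \<epsilon>0 \<longrightarrow>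
           (\<exists>\<rho>>0. \<forall>\<zeta>>0. \<forall>u. regular_solution N K p \<mu> f \<zeta> u \<longrightarrow>
              (\<forall>r1. 0 < r1 \<and> r1 < \<rho> \<and>
                 \<bar>u r1 - gam N k0 \<alpha> p * r1 powr (- theta \<alpha> p)\<bar>
                    \<le> \<epsilon> * r1 powr (- theta \<alpha> p) \<and>
                 \<bar>deriv u r1 + theta \<alpha> p * gam N k0 \<alpha> p * r1 powr (-1 - theta \<alpha> p)\<bar>
                    \<le> \<epsilon> * r1 powr (-1 - theta \<alpha> p)
               \<longrightarrow> (\<forall>r\<in>{0..\<rho>}. u r > 0) \<and>
                   (\<forall>r. r1 < r \<and> r \<le> \<rho> \<longrightarrow>
                      \<bar>u r - gam N k0 \<alpha> p * r powr (- theta \<alpha> p)\<bar>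
                        \<le> C0 * \<epsilon> * r powr (- theta \<alpha> p) \<and>
                      \<bar>deriv u r + theta \<alpha> p * gam N k0 \<alpha> p * r powr (-1 - theta \<alpha> p)\<bar>
                        \<le> C0 * \<epsilon> * r powr (-1 - theta \<alpha> p))))"
proof -
  interpret supercritical N \<alpha> p k0
    using N alpha k0 p by unfold_locales
  have solution: "supercritical_solution N \<alpha> p k0 K f u \<mu> \<zeta>"
    if "regular_solution N K p \<mu> f \<zeta> u" for u \<zeta>
    using N K_cont f_cont p_gt_1 that mu K_pos f_nonneg by unfold_locales auto
  obtain h where h: "h > 0" "h \<le> \<gamma> / 2" and lin: "\<And>w. \<bar>w - \<gamma>\<bar> < h \<Longrightarrow>
      \<bar>k0 * w powr p - k0 * \<gamma> powr p - k0 * p * \<gamma> powr (p - 1) * (w - \<gamma>)\<bar> \<le> \<eta> * \<bar>w - \<gamma>\<bar>"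
    using linearization_radius by blast
  show ?thesis
    apply (rule exI[of _ "h / (2 * \<beta>)"], rule conjI, use h beta_pos in simp)
    apply (rule exI[of _ "(1 + \<theta>) * \<beta>"], rule conjI, use theta_pos beta_pos in simp)
    apply (intro allI impI)
    subgoal for \<epsilon>
    proof -
      assume \<epsilon>: "0 < \<epsilon> \<and> \<epsilon> \<le> h / (2 * \<beta>)"
      then have "\<beta> * \<epsilon> < h" and "2 * \<eta> * \<epsilon> > 0"
        using h beta_pos eta_pos by (simp_all add: field_simps)
      then obtain \<rho> where "\<rho> > 0" and small: "\<forall>r. 0 < r \<and> r \<le> \<rho> \<longrightarrow>
          \<bar>K r / r powr \<alpha> - k0\<bar> * (2 * \<gamma>) powr p + \<mu> * (r powr (\<theta> + 2) * \<bar>f r\<bar>) < 2 * \<eta> * \<epsilon>"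
        using source_error_small[OF K_asym f_asym nu, where \<mu> = \<mu>] by blast
      then show ?thesis
        using supercritical_solution.stays_near_singular_solution[OF solution lin h(2) _
            \<open>\<beta> * \<epsilon> < h\<close> small[rule_format]] \<epsilon> \<open>\<rho> > 0\<close>
        by blast
    qed
    done
qed

end
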